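(* Let $A\in\mathbb{R}^{m\times n}$ and let $\mathcal{D}$ be a distribution over matrices $S\in\mathbb{R}^{m\times\tau}$. Let $X_0\in\mathbb{R}^{n\times m}$ with $\mathrm{Range}(X_0)\subset\mathrm{Range}(A^\top A)$, and define iterates $$X_{k+1} = X_k - A^\top A S_k\,(S_k^\top A^\top A A^\top A S_k)^\dagger S_k^\top A^\top (A X_k - I),\qquad k\ge 0,$$ where $S_0,S_1,\dots$ are drawn independently from $\mathcal{D}$. Let $H_S \eqdef S(S^\top A^\top A A^\top A S)^\dagger S^\top$ for $S\sim\mathcal{D}$. Then $$\mathbb{E}[X_{k+1}-A^\dagger] = \mathbb{E}[I - A^\top A H_S A^\top A]\;\mathbb{E}[X_k - A^\dagger].$$ Furthermore, if $\mathbb{E}[H_S]$ is finite and positive definite, then $$\mathbb{E}\big[\|X_k - A^\dagger\|^2\big]\le \rho^k\,\|X_0-A^\dagger\|^2,\qquad \rho = 1-\lambda_{\min}^+\big(A^\top A\,\mathbb{E}[H_S]\,A^\top A\big).$$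
   Context: $M^\dagger$ denotes the Moore–Penrose pseudoinverse of a real matrix $M$; $\|\cdot\|$ is the Frobenius norm; $\mathrm{Range}(M)$ is the column space of $M$. For a symmetric positive semidefinite matrix $G$, $\lambda_{\min}^+(G)$ denotes its smallest nonzero eigenvalue. *)

theory Defs
  imports "HOL-Probability.Probability"
begin

definition pinv :: "real^'b^'a \<Rightarrow> real^'a^'b" where
  "pinv M = (THE X. M ** X ** M = M \<and> X ** M ** X = X \<and>
                    transpose (M ** X) = M ** X \<and> transpose (X ** M) = X ** M)"

definition col_range :: "real^'b^'a \<Rightarrow> (real^'a) set" where
  "col_range M = range (\<lambda>x. M *v x)"

definition sketch_H :: "real^'n^'m \<Rightarrow> real^'t^'n \<Rightarrow> real^'n^'n" where
  "sketch_H A S = S ** pinv (transpose S ** transpose A ** A ** transpose A ** A ** S) ** transpose S"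

primrec pinv_iter :: "real^'n^'m \<Rightarrow> real^'m^'n \<Rightarrow> nat \<Rightarrow> (nat \<Rightarrow> real^'t^'n) \<Rightarrow> real^'m^'n" where
  "pinv_iter A X0 0 \<omega> = X0"
| "pinv_iter A X0 (Suc k) \<omega> =
     pinv_iter A X0 k \<omega>
     - transpose A ** A ** \<omega> k
       ** pinv (transpose (\<omega> k) ** transpose A ** A ** transpose A ** A ** \<omega> k)
       ** transpose (\<omega> k) ** transpose A ** (A ** pinv_iter A X0 k \<omega> - mat 1)"

definition mat_eigenvalues :: "real^'n^'n \<Rightarrow> real set" where
  "mat_eigenvalues G = {c. \<exists>v. v \<noteq> 0 \<and> G *v v = c *\<^sub>R v}"

definition lambda_min_plus :: "real^'n^'n \<Rightarrow> real" where
  "lambda_min_plus G = Min (mat_eigenvalues G - {0})"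

definition pos_def :: "real^'n^'n \<Rightarrow> bool" where
  "pos_def M \<longleftrightarrow> transpose M = M \<and> (\<forall>x. x \<noteq> 0 \<longrightarrow> x \<bullet> (M *v x) > 0)"

end

theory Submission
  imports Defs
begin

text \<open>Writing \<open>R\<^sub>k = X\<^sub>k - A\<^sup>\<dagger>\<close>, one step of the method reads
  \<open>R\<^sub>k\<^sub>+\<^sub>1 = (I - P\<^sub>S\<^sub>k) R\<^sub>k\<close>, where \<open>P\<^sub>S = A\<^sup>TA H\<^sub>S A\<^sup>TA\<close> is the orthogonal projection onto
  \<open>Range(A\<^sup>TA S)\<close>. Since \<open>S\<^sub>k\<close> is independent of \<open>R\<^sub>k\<close>, expectations of products factor, which gives
  the first claim. For the second, \<open>\<parallel>(I - P)R\<parallel>\<^sup>2 = \<parallel>R\<parallel>\<^sup>2 - \<langle>R, P R\<rangle>\<close>, and independence turns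
  \<open>\<langle>R\<^sub>k, P\<^sub>S\<^sub>k R\<^sub>k\<rangle>\<close> into \<open>\<langle>R\<^sub>k, G R\<^sub>k\<rangle>\<close> with \<open>G = A\<^sup>TA E[H\<^sub>S] A\<^sup>TA\<close>. The columns of \<open>R\<^sub>k\<close>
  stay in \<open>Range(A\<^sup>TA)\<close>, which equals \<open>Range(G)\<close> when \<open>E[H\<^sub>S]\<close> is positive definite, so the
  Rayleigh quotient bound \<open>\<langle>r, G r\<rangle> \<ge> \<lambda>\<^sub>m\<^sub>i\<^sub>n\<^sup>+(G) \<parallel>r\<parallel>\<^sup>2\<close> on \<open>Range(G)\<close> gives a contraction by
  \<open>\<rho>\<close> in every step.\<close>

declare transpose_matrix_vector[simp del]

lemma inner_transpose_mv: "inner (transpose M *v x) y = inner x (M *v y)"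
  for M :: "real^'b^'a"
  by (simp only: transpose_matrix_vector dot_lmul_matrix)

lemma inner_symmetric_mv:
  fixes G :: "real^'n^'n"
  assumes "transpose G = G"
  shows "inner x (G *v y) = inner (G *v x) y"
  using inner_transpose_mv[of G x y] assms by simp

lemma symmetric_iff_self_adjoint:
  fixes C :: "real^'n^'n"
  shows "transpose C = C \<longleftrightarrow> (\<forall>x y. inner (C *v x) y = inner x (C *v y))"
proof
  assume "\<forall>x y. inner (C *v x) y = inner x (C *v y)"
  then have "inner (C *v axis i 1) (axis j 1) = inner (C *v axis j 1) (axis i 1)" for i j
    by (metis inner_commute)
  then show "transpose C = C"
    by (simp add: vec_eq_iff transpose_def matrix_vector_mult_basis column_def inner_axis)
qed (simp add: inner_symmetric_mv)

lemma subspace_range_mv: "subspace (range (\<lambda>x. (M::real^'b^'a) *v x))"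
  by (rule linear_subspace_image[OF matrix_vector_mul_linear subspace_UNIV])

lemma mv_eq_0_if_orthogonal_range_transpose:
  fixes M :: "real^'b^'a"
  assumes "\<And>z. inner x (transpose M *v z) = 0"
  shows "M *v x = 0"
proof -
  have "inner (M *v x) (M *v x) = inner x (transpose M *v (M *v x))"
    using inner_transpose_mv[of M "M *v x" x] by (simp only: inner_commute)
  then show ?thesis using assms[of "M *v x"] by simp
qed

subsection \<open>Orthogonal projection onto a subspace\<close>

definition orth_proj :: "'a::euclidean_space set \<Rightarrow> 'a \<Rightarrow> 'a" where
  "orth_proj W y = (THE p. p \<in> W \<and> (\<forall>w\<in>W. inner (y - p) w = 0))"

lemma orth_proj_ex1:
  fixes W :: "'a::euclidean_space set"
  assumes "subspace W"
  shows "\<exists>!p. p \<in> W \<and> (\<forall>w\<in>W. inner (y - p) w = 0)"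
proof -
  obtain p z where "p \<in> span W" "\<And>w. w \<in> span W \<Longrightarrow> orthogonal z w" "y = p + z"
    using orthogonal_subspace_decomp_exists by blast
  moreover have "span W = W" using assms by (simp add: span_eq_iff)
  ultimately have p: "p \<in> W \<and> (\<forall>w\<in>W. inner (y - p) w = 0)"
    by (auto simp: orthogonal_def)
  show ?thesis
  proof (rule ex1I[of _ p])
    fix q assume q: "q \<in> W \<and> (\<forall>w\<in>W. inner (y - q) w = 0)"
    then have "q - p \<in> W" using p assms by (simp add: subspace_diff)
    then have "inner (q - p) (q - p) = inner (y - p) (q - p) - inner (y - q) (q - p)"
      by (simp add: inner_diff_left)
    also have "\<dots> = 0" using p q \<open>q - p \<in> W\<close> by simp
    finally show "q = p" by simp
  qed (fact p)
qed

lemma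
  fixes W :: "'a::euclidean_space set"
  assumes "subspace W"
  shows orth_proj_in: "orth_proj W y \<in> W"
    and orth_proj_orthogonal: "w \<in> W \<Longrightarrow> inner (y - orth_proj W y) w = 0"
  using theI'[OF orth_proj_ex1[OF assms, of y]] unfolding orth_proj_def[symmetric] by auto

lemma orth_proj_eqI:
  fixes W :: "'a::euclidean_space set"
  assumes "subspace W" "p \<in> W" "\<And>w. w \<in> W \<Longrightarrow> inner (y - p) w = 0"
  shows "orth_proj W y = p"
  unfolding orth_proj_def using orth_proj_ex1[OF assms(1)] assms(2,3) by (intro the1_equality) auto

lemma orth_proj_self: "subspace W \<Longrightarrow> x \<in> W \<Longrightarrow> orth_proj W x = x"
  by (rule orth_proj_eqI) auto

lemma orth_proj_self_adjoint:
  fixes W :: "'a::euclidean_space set"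
  assumes "subspace W"
  shows "inner (orth_proj W y) z = inner y (orth_proj W z)"
proof -
  have "inner (y - orth_proj W y) (orth_proj W z) = 0" "inner (z - orth_proj W z) (orth_proj W y) = 0"
    using orth_proj_in[OF assms] orth_proj_orthogonal[OF assms] by auto
  then show ?thesis by (simp add: inner_diff_left inner_diff_right inner_commute)
qed

lemma linear_orth_proj:
  fixes W :: "'a::euclidean_space set"
  assumes "subspace W"
  shows "linear (orth_proj W)"
proof (rule linearI)
  note W = orth_proj_in[OF assms] orth_proj_orthogonal[OF assms]
  show "orth_proj W (x + y) = orth_proj W x + orth_proj W y" for x y
  proof (rule orth_proj_eqI[OF assms])
    show "orth_proj W x + orth_proj W y \<in> W" using W assms by (simp add: subspace_add)
    show "inner (x + y - (orth_proj W x + orth_proj W y)) w = 0" if "w \<in> W" for w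
    proof -
      have "x + y - (orth_proj W x + orth_proj W y) = (x - orth_proj W x) + (y - orth_proj W y)"
        by simp
      then show ?thesis using W(2)[OF that, of x] W(2)[OF that, of y] by (simp only: inner_add_left)
    qed
  qed
  show "orth_proj W (c *\<^sub>R x) = c *\<^sub>R orth_proj W x" for c x
  proof (rule orth_proj_eqI[OF assms])
    show "c *\<^sub>R orth_proj W x \<in> W" using W assms by (simp add: subspace_scale)
    show "inner (c *\<^sub>R x - c *\<^sub>R orth_proj W x) w = 0" if "w \<in> W" for w
      using W(2)[OF that, of x] by (simp only: scaleR_diff_right[symmetric] inner_scaleR_left mult_zero_right)
  qed
qed

subsection \<open>The Moore--Penrose pseudoinverse\<close>

definition penrose_inverse :: "real^'b^'a \<Rightarrow> real^'a^'b \<Rightarrow> bool" where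
  "penrose_inverse M X \<longleftrightarrow> M ** X ** M = M \<and> X ** M ** X = X \<and>
     transpose (M ** X) = M ** X \<and> transpose (X ** M) = X ** M"

lemma mv_inj_on_range_transpose:
  fixes M :: "real^'b^'a"
  assumes "x \<in> range (\<lambda>z. transpose M *v z)" "x' \<in> range (\<lambda>z. transpose M *v z)"
    and "M *v x = M *v x'"
  shows "x = x'"
proof -
  obtain z where z: "x - x' = transpose M *v z"
    using subspace_diff[OF subspace_range_mv assms(1,2)] by blast
  have "inner (x - x') (x - x') = inner z (M *v (x - x'))" by (simp add: z inner_transpose_mv)
  also have "\<dots> = 0" using assms(3) by (simp add: matrix_vector_mult_diff_distrib)
  finally show ?thesis by simp
qed

lemma mv_orth_proj_range_transpose:
  fixes M :: "real^'b^'a"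
  shows "M *v orth_proj (range (\<lambda>z. transpose M *v z)) v = M *v v"
proof -
  have "M *v (v - orth_proj (range (\<lambda>z. transpose M *v z)) v) = 0"
    by (rule mv_eq_0_if_orthogonal_range_transpose) (blast intro: orth_proj_orthogonal[OF subspace_range_mv])
  then show ?thesis by (simp add: matrix_vector_mult_diff_distrib)
qed

definition min_norm_solution :: "real^'b^'a \<Rightarrow> real^'a \<Rightarrow> real^'b" where
  "min_norm_solution M y = (THE x. x \<in> range (\<lambda>z. transpose M *v z) \<and>
                                   M *v x = orth_proj (range (\<lambda>z. M *v z)) y)"

lemma min_norm_solution_ex1:
  fixes M :: "real^'b^'a"
  shows "\<exists>!x. x \<in> range (\<lambda>z. transpose M *v z) \<and> M *v x = orth_proj (range (\<lambda>z. M *v z)) y"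
proof -
  let ?RT = "range (\<lambda>z. transpose M *v z)"
  obtain v where v: "orth_proj (range (\<lambda>z. M *v z)) y = M *v v"
    using orth_proj_in[OF subspace_range_mv, of M y] by blast
  show ?thesis
  proof (rule ex1I[of _ "orth_proj ?RT v"])
    show "orth_proj ?RT v \<in> ?RT \<and> M *v orth_proj ?RT v = orth_proj (range (\<lambda>z. M *v z)) y"
      by (simp only: v mv_orth_proj_range_transpose orth_proj_in[OF subspace_range_mv] simp_thms)
    show "x = orth_proj ?RT v" if "x \<in> ?RT \<and> M *v x = orth_proj (range (\<lambda>z. M *v z)) y" for x
      using that orth_proj_in[OF subspace_range_mv] mv_inj_on_range_transpose
      by (metis v mv_orth_proj_range_transpose)
  qed
qed

lemma
  fixes M :: "real^'b^'a"
  shows min_norm_solution_in_range: "min_norm_solution M y \<in> range (\<lambda>z. transpose M *v z)"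
    and mv_min_norm_solution: "M *v min_norm_solution M y = orth_proj (range (\<lambda>z. M *v z)) y"
  using theI'[OF min_norm_solution_ex1[of M y]] unfolding min_norm_solution_def by blast+

lemma min_norm_solution_eqI:
  fixes M :: "real^'b^'a"
  shows "x \<in> range (\<lambda>z. transpose M *v z) \<Longrightarrow> M *v x = orth_proj (range (\<lambda>z. M *v z)) y
    \<Longrightarrow> min_norm_solution M y = x"
  using min_norm_solution_ex1[of M y] min_norm_solution_in_range mv_min_norm_solution by blast

lemma linear_min_norm_solution: "linear (min_norm_solution (M :: real^'b^'a))"
proof (rule linearI)
  note sT = subspace_range_mv[of "transpose M"]
  note proj = linear_orth_proj[OF subspace_range_mv[of M]]
  show "min_norm_solution M (x + y) = min_norm_solution M x + min_norm_solution M y" for x y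
    by (intro min_norm_solution_eqI)
       (simp_all add: subspace_add[OF sT] min_norm_solution_in_range mv_min_norm_solution
         linear_add[OF proj] matrix_vector_right_distrib)
  show "min_norm_solution M (c *\<^sub>R x) = c *\<^sub>R min_norm_solution M x" for c x
    by (intro min_norm_solution_eqI)
       (simp_all add: subspace_scale[OF sT] min_norm_solution_in_range mv_min_norm_solution
         linear_scale[OF proj] matrix_vector_mult_scaleR)
qed

lemma penrose_inverse_exists:
  fixes M :: "real^'b^'a"
  shows "penrose_inverse M (matrix (min_norm_solution M))"
proof -
  let ?RT = "range (\<lambda>z. transpose M *v z)" and ?RM = "range (\<lambda>z. M *v z)" and ?g = "min_norm_solution M"
  note sT = subspace_range_mv[of "transpose M"] and sM = subspace_range_mv[of M]
  have X: "matrix ?g *v y = ?g y" for y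
    by (simp add: matrix_vector_mul(2)[OF linear_min_norm_solution])
  have gM: "?g (M *v v) = orth_proj ?RT v" for v
    using orth_proj_in[OF sT] mv_orth_proj_range_transpose orth_proj_self[OF sM]
    by (intro min_norm_solution_eqI) auto
  have g_proj: "?g (orth_proj ?RM y) = ?g y" for y
    using min_norm_solution_in_range mv_min_norm_solution orth_proj_self[OF sM] orth_proj_in[OF sM]
    by (intro min_norm_solution_eqI) auto
  have "M ** matrix ?g ** M = M" "matrix ?g ** M ** matrix ?g = matrix ?g"
    unfolding matrix_eq
    by (simp_all add: matrix_vector_mul_assoc[symmetric] X gM g_proj mv_orth_proj_range_transpose
        mv_min_norm_solution)
  moreover have "transpose (M ** matrix ?g) = M ** matrix ?g" "transpose (matrix ?g ** M) = matrix ?g ** M"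
    unfolding symmetric_iff_self_adjoint
    by (simp_all add: matrix_vector_mul_assoc[symmetric] X gM mv_min_norm_solution
        orth_proj_self_adjoint[OF sM] orth_proj_self_adjoint[OF sT])
  ultimately show ?thesis unfolding penrose_inverse_def by blast
qed

lemma penrose_inverse_unique:
  assumes X: "penrose_inverse M X" and Y: "penrose_inverse M Y"
  shows "X = Y"
proof -
  have x1: "M ** X ** M = M" and x2: "X ** M ** X = X"
    and x3: "transpose X ** transpose M = M ** X" and x4: "transpose M ** transpose X = X ** M"
    using X unfolding penrose_inverse_def by (auto simp: matrix_transpose_mul)
  have y1: "M ** Y ** M = M" and y2: "Y ** M ** Y = Y"
    and y3: "transpose Y ** transpose M = M ** Y" and y4: "transpose M ** transpose Y = Y ** M"
    using Y unfolding penrose_inverse_def by (auto simp: matrix_transpose_mul)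
  have y1': "transpose M ** transpose Y ** transpose M = transpose M"
    using arg_cong[OF y1, of transpose] by (simp add: matrix_transpose_mul matrix_mul_assoc)
  have x1': "transpose M ** transpose X ** transpose M = transpose M"
    using arg_cong[OF x1, of transpose] by (simp add: matrix_transpose_mul matrix_mul_assoc)
  have "X = X ** (M ** X)" using x2 by (simp add: matrix_mul_assoc)
  also have "\<dots> = X ** (transpose X ** transpose M)" by (simp only: x3)
  also have "\<dots> = X ** (transpose X ** (transpose M ** transpose Y ** transpose M))"
    by (simp only: y1')
  also have "\<dots> = X ** (transpose X ** transpose M) ** (transpose Y ** transpose M)"
    by (simp only: matrix_mul_assoc)
  also have "\<dots> = X ** (M ** X) ** (M ** Y)" by (simp only: x3 y3)
  also have "\<dots> = X ** M ** Y" using x2 by (simp add: matrix_mul_assoc)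
  finally have XMY: "X = X ** M ** Y" .
  have "Y = (Y ** M) ** Y" using y2 by (simp add: matrix_mul_assoc)
  also have "\<dots> = (transpose M ** transpose Y) ** Y" by (simp only: y4)
  also have "\<dots> = (transpose M ** transpose X ** transpose M) ** transpose Y ** Y"
    by (simp only: x1')
  also have "\<dots> = (transpose M ** transpose X) ** (transpose M ** transpose Y) ** Y"
    by (simp only: matrix_mul_assoc)
  also have "\<dots> = (X ** M) ** (Y ** M) ** Y" by (simp only: x4 y4)
  also have "\<dots> = X ** M ** (Y ** M ** Y)" by (simp only: matrix_mul_assoc)
  also have "\<dots> = X ** M ** Y" by (simp only: y2)
  finally show ?thesis using XMY by simp
qed

lemma pinv_penrose_inverse: "penrose_inverse M (pinv M)"
proof -
  have "\<exists>!X. penrose_inverse M X"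
    using penrose_inverse_exists[of M] penrose_inverse_unique by blast
  then show ?thesis unfolding pinv_def penrose_inverse_def[symmetric] by (rule theI')
qed

lemma pinv_eqI: "penrose_inverse M X \<Longrightarrow> pinv M = X"
  using penrose_inverse_unique pinv_penrose_inverse by blast

lemma
  fixes M :: "real^'b^'a"
  shows mult_pinv_mult: "M ** pinv M ** M = M"
    and pinv_mult_pinv: "pinv M ** M ** pinv M = pinv M"
    and symmetric_mult_pinv: "transpose (M ** pinv M) = M ** pinv M"
    and symmetric_pinv_mult: "transpose (pinv M ** M) = pinv M ** M"
  using pinv_penrose_inverse[of M] unfolding penrose_inverse_def by auto

lemma symmetric_pinv:
  fixes M :: "real^'n^'n"
  assumes "transpose M = M"
  shows "transpose (pinv M) = pinv M"
proof -
  have "penrose_inverse M (transpose (pinv M))"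
    using arg_cong[OF mult_pinv_mult[of M], of transpose] arg_cong[OF pinv_mult_pinv[of M], of transpose]
      symmetric_mult_pinv[of M] symmetric_pinv_mult[of M] assms
    unfolding penrose_inverse_def by (simp add: matrix_transpose_mul matrix_mul_assoc)
  then show ?thesis by (rule pinv_eqI[symmetric])
qed

lemma transpose_mult_pinv: "transpose M ** M ** pinv M = transpose M"
proof -
  have "transpose M ** M ** pinv M = transpose (M ** pinv M ** M)"
    using symmetric_mult_pinv[of M] by (metis matrix_mul_assoc matrix_transpose_mul)
  then show ?thesis by (simp only: mult_pinv_mult)
qed

lemma pinv_eq_transpose_mult: "pinv M = transpose M ** transpose (pinv M) ** pinv M"
proof -
  have "pinv M = transpose (pinv M ** M) ** pinv M"
    by (simp only: symmetric_pinv_mult pinv_mult_pinv)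
  then show ?thesis by (simp add: matrix_transpose_mul)
qed

lemma
  fixes B :: "real^'t^'n"
  defines "P \<equiv> B ** pinv (transpose B ** B) ** transpose B"
  shows symmetric_range_projection: "transpose P = P"
    and idempotent_range_projection: "P ** P = P"
proof -
  have G: "transpose (pinv (transpose B ** B)) = pinv (transpose B ** B)"
    by (rule symmetric_pinv) (simp add: matrix_transpose_mul)
  show "transpose P = P" unfolding P_def by (simp add: matrix_transpose_mul matrix_mul_assoc G)
  have "P ** P = B ** (pinv (transpose B ** B) ** (transpose B ** B) ** pinv (transpose B ** B)) ** transpose B"
    unfolding P_def by (simp add: matrix_mul_assoc)
  then show "P ** P = P" unfolding P_def by (simp only: pinv_mult_pinv)
qed

subsection \<open>Frobenius geometry of orthogonal projections\<close>

lemma inner_matrix_mult_right: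
  fixes X :: "real^'m^'n" and P :: "real^'k^'n" and R :: "real^'m^'k"
  shows "inner X (P ** R) = inner P (X ** transpose R)"
proof -
  have "inner X (P ** R) = (\<Sum>i\<in>UNIV. \<Sum>j\<in>UNIV. \<Sum>l\<in>UNIV. P$i$l * (X$i$j * R$l$j))"
    by (simp add: inner_vec_def matrix_matrix_mult_def sum_distrib_left mult_ac)
  also have "\<dots> = (\<Sum>i\<in>UNIV. \<Sum>l\<in>UNIV. \<Sum>j\<in>UNIV. P$i$l * (X$i$j * R$l$j))"
    by (rule sum.cong[OF refl], rule sum.swap)
  also have "\<dots> = inner P (X ** transpose R)"
    by (simp add: inner_vec_def matrix_matrix_mult_def transpose_def sum_distrib_left)
  finally show ?thesis .
qed

lemma inner_transpose_transpose: "inner (transpose X) (transpose Y) = inner X Y"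
  for X Y :: "real^'m^'n"
  unfolding inner_vec_def transpose_def by simp (subst sum.swap, rule refl)

lemma inner_matrix_mult_left:
  fixes P :: "real^'k^'n" and R :: "real^'m^'k" and S :: "real^'m^'n"
  shows "inner (P ** R) S = inner R (transpose P ** S)"
proof -
  have "inner (P ** R) S = inner P (S ** transpose R)"
    by (subst inner_commute) (rule inner_matrix_mult_right)
  also have "\<dots> = inner (transpose P) (R ** transpose S)"
    using inner_transpose_transpose[of "transpose P" "R ** transpose S"]
    by (simp add: matrix_transpose_mul)
  also have "\<dots> = inner R (transpose P ** S)"
    by (rule inner_matrix_mult_right[symmetric])
  finally show ?thesis .
qed

lemma inner_columns: "inner X Y = (\<Sum>j\<in>UNIV. inner (column j X) (column j Y))"
  for X Y :: "real^'m^'n"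
  unfolding inner_vec_def column_def by simp (subst sum.swap, rule refl)

lemma column_matrix_mult: "column j (P ** R) = P *v column j R"
  by (simp add: column_def matrix_matrix_mult_def matrix_vector_mult_def vec_eq_iff)

lemma
  fixes P :: "real^'n^'n" and R :: "real^'m^'n"
  assumes "transpose P = P" "P ** P = P"
  shows inner_projection_eq_norm2: "inner R (P ** R) = (norm (P ** R))\<^sup>2"
    and norm2_complement_projection: "(norm ((mat 1 - P) ** R))\<^sup>2 = (norm R)\<^sup>2 - inner R (P ** R)"
proof -
  have PR: "inner (P ** R) (P ** R) = inner R (P ** R)"
    using assms by (simp add: inner_matrix_mult_left matrix_mul_assoc)
  then show "inner R (P ** R) = (norm (P ** R))\<^sup>2" by (simp add: power2_norm_eq_inner)
  have "(mat 1 - P) ** R = R - P ** R"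
    unfolding matrix_eq by (simp add: matrix_vector_mul_assoc[symmetric] matrix_vector_mult_diff_rdistrib)
  then show "(norm ((mat 1 - P) ** R))\<^sup>2 = (norm R)\<^sup>2 - inner R (P ** R)"
    using PR by (simp add: power2_norm_eq_inner inner_diff_left inner_diff_right inner_commute)
qed

lemma
  fixes P :: "real^'n^'n" and R :: "real^'m^'n"
  assumes "transpose P = P" "P ** P = P"
  shows norm_projection_le: "norm (P ** R) \<le> norm R"
    and norm_complement_projection_le: "norm ((mat 1 - P) ** R) \<le> norm R"
proof -
  have "(norm ((mat 1 - P) ** R))\<^sup>2 + (norm (P ** R))\<^sup>2 = (norm R)\<^sup>2"
    using norm2_complement_projection[OF assms, of R] inner_projection_eq_norm2[OF assms, of R] by linarith
  then have "(norm (P ** R))\<^sup>2 \<le> (norm R)\<^sup>2" "(norm ((mat 1 - P) ** R))\<^sup>2 \<le> (norm R)\<^sup>2"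
    by (smt (verit) zero_le_power2)+
  then show "norm (P ** R) \<le> norm R" "norm ((mat 1 - P) ** R) \<le> norm R"
    by (auto intro: power2_le_imp_le)
qed

subsection \<open>The smallest nonzero eigenvalue as a Rayleigh-quotient bound\<close>

lemma finite_mat_eigenvalues:
  fixes G :: "real^'n^'n"
  assumes "transpose G = G"
  shows "finite (mat_eigenvalues G)"
proof -
  let ?E = "mat_eigenvalues G"
  define ev where "ev c = (SOME v. v \<noteq> 0 \<and> G *v v = c *\<^sub>R v)" for c
  have ev: "ev c \<noteq> 0" "G *v ev c = c *\<^sub>R ev c" if "c \<in> ?E" for c
    using someI_ex[of "\<lambda>v. v \<noteq> 0 \<and> G *v v = c *\<^sub>R v"] that
    unfolding mat_eigenvalues_def ev_def by auto
  have inj: "inj_on ev ?E"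
  proof (rule inj_onI)
    fix c d assume "c \<in> ?E" "d \<in> ?E" "ev c = ev d"
    then have "c *\<^sub>R ev c = d *\<^sub>R ev c" "ev c \<noteq> 0" using ev by metis+
    then show "c = d" by simp
  qed
  have "pairwise orthogonal (ev ` ?E)"
  proof (clarsimp simp: pairwise_def)
    fix c d assume c: "c \<in> ?E" and d: "d \<in> ?E" and "ev c \<noteq> ev d"
    then have "c \<noteq> d" by auto
    have "c * inner (ev c) (ev d) = inner (G *v ev c) (ev d)" using ev(2)[OF c] by simp
    also have "\<dots> = inner (ev c) (G *v ev d)" by (rule inner_symmetric_mv[OF assms, symmetric])
    also have "\<dots> = d * inner (ev c) (ev d)" using ev(2)[OF d] by simp
    finally show "orthogonal (ev c) (ev d)"
      using \<open>c \<noteq> d\<close> by (simp add: orthogonal_def)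
  qed
  moreover have "0 \<notin> ev ` ?E" using ev(1) by auto
  ultimately have "independent (ev ` ?E)" by (rule pairwise_orthogonal_independent)
  then have "finite (ev ` ?E)" using independent_bound by blast
  then show ?thesis using finite_imageD[OF _ inj] by blast
qed

lemma linear_coeff_eq_0_if_quadratic_nonneg:
  fixes a b :: real
  assumes "\<And>t. 0 \<le> a * t + b * t\<^sup>2"
  shows "a = 0"
proof (rule ccontr)
  assume "a \<noteq> 0"
  define c where "c = \<bar>b\<bar> + 1"
  have "c > 0" unfolding c_def by simp
  have "a * (- a / c) + b * (- a / c)\<^sup>2 \<le> a * (- a / c) + (c - 1) * (- a / c)\<^sup>2"
    unfolding c_def by (simp add: mult_right_mono)
  also have "\<dots> = - a\<^sup>2 / c\<^sup>2" using \<open>c > 0\<close> by (simp add: field_simps power2_eq_square)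
  also have "\<dots> < 0" using \<open>a \<noteq> 0\<close> \<open>c > 0\<close> by simp
  finally show False using assms[of "- a / c"] by simp
qed

lemma rayleigh_minimiser_exists:
  fixes G :: "real^'n^'n"
  assumes V: "subspace V" and r: "r \<in> V" "r \<noteq> 0"
  obtains u where "u \<in> V" "norm u = 1"
    "\<And>v. v \<in> V \<Longrightarrow> inner u (G *v u) * (norm v)\<^sup>2 \<le> inner v (G *v v)"
proof -
  let ?f = "\<lambda>u. inner u (G *v u)" and ?K = "V \<inter> sphere 0 1"
  have "compact ?K" using closed_subspace[OF V] by (intro closed_Int_compact) auto
  moreover have "r /\<^sub>R norm r \<in> ?K" using r V by (simp add: subspace_scale)
  moreover have "continuous_on ?K ?f"
    by (intro continuous_intros linear_continuous_on matrix_vector_mul_linear)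
  ultimately obtain u where u: "u \<in> ?K" and u_min: "\<And>y. y \<in> ?K \<Longrightarrow> ?f u \<le> ?f y"
    using continuous_attains_inf[of ?K ?f] by blast
  have "?f u * (norm v)\<^sup>2 \<le> ?f v" if "v \<in> V" for v
  proof (cases "v = 0")
    case False
    have "v /\<^sub>R norm v \<in> ?K" using that False V by (simp add: subspace_scale)
    then have "?f u \<le> ?f (v /\<^sub>R norm v)" using u_min by blast
    also have "\<dots> = ?f v / (norm v)\<^sup>2"
      by (simp add: matrix_vector_mult_scaleR power2_eq_square field_simps)
    finally show ?thesis using False by (simp add: field_simps)
  qed simp
  with u that show ?thesis by auto
qed

lemma eigenvector_if_minimises_rayleigh:
  fixes G :: "real^'n^'n"
  assumes G: "transpose G = G" and V: "subspace V" and GV: "G *v u \<in> V"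
    and u: "u \<in> V" "norm u = 1"
    and low: "\<And>v. v \<in> V \<Longrightarrow> inner u (G *v u) * (norm v)\<^sup>2 \<le> inner v (G *v v)"
  shows "G *v u = inner u (G *v u) *\<^sub>R u"
proof -
  define \<mu> where "\<mu> = inner u (G *v u)"
  have "inner w (G *v u - \<mu> *\<^sub>R u) = 0" if w: "w \<in> V" for w
  proof -
    have uGw: "inner u (G *v w) = inner w (G *v u)"
      using inner_symmetric_mv[OF G, of u w] by (simp add: inner_commute)
    have "0 \<le> (2 * inner w (G *v u - \<mu> *\<^sub>R u)) * t + (inner w (G *v w) - \<mu> * (norm w)\<^sup>2) * t\<^sup>2"
      for t
    proof -
      have "u + t *\<^sub>R w \<in> V" using u w V by (simp add: subspace_add subspace_scale)
      then have "\<mu> * (norm (u + t *\<^sub>R w))\<^sup>2 \<le> inner (u + t *\<^sub>R w) (G *v (u + t *\<^sub>R w))"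
        unfolding \<mu>_def by (rule low)
      moreover have "inner (u + t *\<^sub>R w) (G *v (u + t *\<^sub>R w))
          = \<mu> + 2 * t * inner w (G *v u) + t\<^sup>2 * inner w (G *v w)"
        unfolding \<mu>_def using uGw
        by (simp add: inner_add_left inner_add_right matrix_vector_right_distrib
            matrix_vector_mult_scaleR power2_eq_square inner_commute algebra_simps)
      moreover have "(norm (u + t *\<^sub>R w))\<^sup>2 = 1 + 2 * t * inner w u + t\<^sup>2 * (norm w)\<^sup>2"
        using norm_eq_1[of u] u(2) unfolding power2_norm_eq_inner
        by (simp add: inner_add_left inner_add_right inner_commute power2_eq_square algebra_simps)
      ultimately show ?thesis by (simp add: inner_diff_right algebra_simps power2_eq_square)
    qed
    then show ?thesis using linear_coeff_eq_0_if_quadratic_nonneg by fastforce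
  qed
  moreover have "G *v u - \<mu> *\<^sub>R u \<in> V" using u GV V by (simp add: subspace_diff subspace_scale)
  ultimately have "inner (G *v u - \<mu> *\<^sub>R u) (G *v u - \<mu> *\<^sub>R u) = 0" by blast
  then show ?thesis unfolding \<mu>_def by simp
qed

lemma lambda_min_plus_le_rayleigh:
  fixes G :: "real^'n^'n"
  assumes G: "transpose G = G" and r: "r \<in> range (\<lambda>x. G *v x)"
  shows "lambda_min_plus G * (norm r)\<^sup>2 \<le> inner r (G *v r)"
proof (cases "r = 0")
  case False
  let ?V = "range (\<lambda>x. G *v x)"
  obtain u where u: "u \<in> ?V" "norm u = 1"
    and low: "\<And>v. v \<in> ?V \<Longrightarrow> inner u (G *v u) * (norm v)\<^sup>2 \<le> inner v (G *v v)"
    using rayleigh_minimiser_exists[OF subspace_range_mv r False] by blast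
  define \<mu> where "\<mu> = inner u (G *v u)"
  have eig: "G *v u = \<mu> *\<^sub>R u"
    unfolding \<mu>_def by (rule eigenvector_if_minimises_rayleigh[OF G subspace_range_mv _ u low]) simp
  have "\<mu> \<noteq> 0"
  proof
    assume "\<mu> = 0"
    obtain y where "u = G *v y" using u(1) by blast
    then have "inner u u = inner y (G *v u)" by (simp add: inner_symmetric_mv[OF G])
    then show False using eig \<open>\<mu> = 0\<close> u(2) by simp
  qed
  with eig u(2) have "\<mu> \<in> mat_eigenvalues G - {0}"
    unfolding mat_eigenvalues_def by (auto intro!: exI[of _ u])
  then have "lambda_min_plus G \<le> \<mu>"
    unfolding lambda_min_plus_def using finite_mat_eigenvalues[OF G] by (intro Min_le) auto
  then have "lambda_min_plus G * (norm r)\<^sup>2 \<le> \<mu> * (norm r)\<^sup>2" by (simp add: mult_right_mono)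
  also have "\<dots> \<le> inner r (G *v r)" unfolding \<mu>_def by (rule low[OF r])
  finally show ?thesis .
qed simp

lemma lambda_min_plus_le_rayleigh_matrix:
  fixes G :: "real^'n^'n" and R :: "real^'m^'n"
  assumes "transpose G = G" and "\<And>x. R *v x \<in> range (\<lambda>x. G *v x)"
  shows "lambda_min_plus G * (norm R)\<^sup>2 \<le> inner R (G ** R)"
proof -
  have "lambda_min_plus G * (norm R)\<^sup>2 = (\<Sum>j\<in>UNIV. lambda_min_plus G * (norm (column j R))\<^sup>2)"
    by (simp add: power2_norm_eq_inner inner_columns[of R R] sum_distrib_left)
  also have "\<dots> \<le> (\<Sum>j\<in>UNIV. inner (column j R) (G *v column j R))"
    using assms by (intro sum_mono lambda_min_plus_le_rayleigh) (auto simp: matrix_vector_mult_basis[symmetric])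
  also have "\<dots> = inner R (G ** R)" by (simp add: inner_columns[of R] column_matrix_mult)
  finally show ?thesis .
qed

text \<open>For symmetric matrices the range is the orthogonal complement of the kernel, so
  inclusion of kernels reverses to inclusion of ranges.\<close>

lemma range_subset_if_kernel_subset:
  fixes G C :: "real^'n^'n"
  assumes G: "transpose G = G" and C: "transpose C = C"
    and ker: "\<And>x. G *v x = 0 \<Longrightarrow> C *v x = 0"
  shows "C *v z \<in> range (\<lambda>x. G *v x)"
proof -
  let ?V = "range (\<lambda>x. G *v x)"
  obtain y1 y2 where y1: "y1 \<in> span ?V" and y2: "\<And>w. w \<in> span ?V \<Longrightarrow> orthogonal y2 w"
    and y: "C *v z = y1 + y2"
    using orthogonal_subspace_decomp_exists by blast
  have "G *v y2 = 0"
    using y2[of "G *v (G *v y2)"] inner_symmetric_mv[OF G, of y2 "G *v y2"]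
    by (simp add: span_base orthogonal_def)
  then have "inner (C *v z) y2 = 0"
    using ker inner_symmetric_mv[OF C, of z y2] by simp
  moreover have "inner y1 y2 = 0" using y1 y2 by (simp add: orthogonal_def inner_commute)
  ultimately have "y2 = 0" by (simp add: y inner_add_left)
  then show ?thesis using y y1 by (simp add: span_eq_iff[THEN iffD2, OF subspace_range_mv])
qed

subsection \<open>Borel measurability of matrix operations and of the pseudoinverse\<close>

lemma borel_measurable_vec_nth[measurable (raw)]:
  fixes f :: "'a \<Rightarrow> 'c::euclidean_space^'n"
  assumes "f \<in> borel_measurable M"
  shows "(\<lambda>x. f x $ i) \<in> borel_measurable M"
  using measurable_compose[OF assms borel_measurable_continuous_onI[OF continuous_on_component[OF continuous_on_id]]]
  by simp

lemma borel_measurable_vecI: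
  fixes f :: "'a \<Rightarrow> 'c::euclidean_space^'n"
  assumes "\<And>i. (\<lambda>x. f x $ i) \<in> borel_measurable M"
  shows "f \<in> borel_measurable M"
  unfolding borel_measurable_euclidean_space[where f=f]
proof
  fix b :: "'c^'n" assume "b \<in> Basis"
  then obtain i u where b: "b = axis i u" and "u \<in> Basis" unfolding Basis_vec_def by blast
  have "(\<lambda>x. inner (f x $ i) u) \<in> borel_measurable M" using assms[of i] by measurable
  then show "(\<lambda>x. inner (f x) b) \<in> borel_measurable M" by (simp add: b inner_axis)
qed

lemma borel_measurable_matrix_mult[measurable (raw)]:
  fixes F :: "'a \<Rightarrow> real^'k^'n" and G :: "'a \<Rightarrow> real^'m^'k"
  assumes "F \<in> borel_measurable M" "G \<in> borel_measurable M"
  shows "(\<lambda>x. F x ** G x) \<in> borel_measurable M"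
  by (intro borel_measurable_vecI) (use assms in \<open>simp add: matrix_matrix_mult_def\<close>)

lemma borel_measurable_matrix_vector_mult[measurable (raw)]:
  fixes F :: "'a \<Rightarrow> real^'k^'n" and g :: "'a \<Rightarrow> real^'k"
  assumes "F \<in> borel_measurable M" "g \<in> borel_measurable M"
  shows "(\<lambda>x. F x *v g x) \<in> borel_measurable M"
  by (intro borel_measurable_vecI) (use assms in \<open>simp add: matrix_vector_mult_def\<close>)

lemma borel_measurable_transpose[measurable (raw)]:
  fixes F :: "'a \<Rightarrow> real^'k^'n"
  assumes "F \<in> borel_measurable M"
  shows "(\<lambda>x. transpose (F x)) \<in> borel_measurable M"
  by (intro borel_measurable_vecI) (use assms in \<open>simp add: transpose_def\<close>)

lemma borel_measurable_det[measurable (raw)]: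
  fixes F :: "'a \<Rightarrow> real^'n^'n"
  assumes "F \<in> borel_measurable M"
  shows "(\<lambda>x. det (F x)) \<in> borel_measurable M"
  unfolding det_def using assms by measurable

lemma det_tikhonov_nonzero:
  fixes M :: "real^'b^'a"
  assumes "\<delta> > 0"
  shows "det (transpose M ** M + \<delta> *\<^sub>R mat 1) \<noteq> 0"
proof -
  have "w = 0" if "(transpose M ** M + \<delta> *\<^sub>R mat 1) *v w = 0" for w
  proof -
    have "transpose M *v (M *v w) + \<delta> *\<^sub>R w = 0"
      using that by (simp add: matrix_vector_mult_add_rdistrib matrix_vector_mul_assoc
          scaleR_matrix_vector_assoc[symmetric])
    then have "inner w (transpose M *v (M *v w) + \<delta> *\<^sub>R w) = 0" by simp
    then have "inner (M *v w) (M *v w) + \<delta> * inner w w = 0"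
      using inner_transpose_mv[of M "M *v w" w] by (simp add: inner_add_right inner_commute)
    then have "\<delta> * inner w w = 0"
      by (smt (verit) inner_ge_zero mult_nonneg_nonneg assms)
    then show "w = 0" using assms by simp
  qed
  then have "inj (\<lambda>w. (transpose M ** M + \<delta> *\<^sub>R mat 1) *v w)"
    by (simp add: linear_injective_0 matrix_vector_mul_linear)
  then show ?thesis
    using det_nz_iff_inj[of "\<lambda>w. (transpose M ** M + \<delta> *\<^sub>R mat 1) *v w"] matrix_vector_mul_linear
    by simp
qed

text \<open>\<open>M\<^sup>\<dagger>\<close> is discontinuous in \<open>M\<close>, but it is the pointwise limit of the Tikhonov-regularised
  inverses \<open>(M\<^sup>TM + \<delta>I)\<^sup>-\<^sup>1M\<^sup>T\<close>, whose entries are rational in \<open>M\<close> by Cramer's rule; this makes it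
  Borel measurable.\<close>

lemma tikhonov_pinv_error:
  fixes M :: "real^'b^'a"
  assumes \<delta>: "\<delta> > 0" and u: "(transpose M ** M + \<delta> *\<^sub>R mat 1) *v u = transpose M *v y"
  shows "norm (u - pinv M *v y) \<le> sqrt \<delta> * norm (transpose (pinv M) *v (pinv M *v y))"
proof -
  define x where "x = pinv M *v y"
  define v where "v = transpose (pinv M) *v x"
  define w where "w = u - x"
  define z where "z = M *v w"
  have x: "x = transpose M *v v"
    unfolding x_def v_def by (subst pinv_eq_transpose_mult) (simp add: matrix_vector_mul_assoc matrix_mul_assoc)
  have "transpose M *v y = transpose M *v (M *v x)"
    unfolding x_def by (simp add: matrix_vector_mul_assoc matrix_mul_assoc transpose_mult_pinv)
  then have "transpose M *v z + \<delta> *\<^sub>R w = - (\<delta> *\<^sub>R x)"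
    using u unfolding z_def w_def
    by (simp add: matrix_vector_mult_add_rdistrib matrix_vector_mul_assoc scaleR_matrix_vector_assoc[symmetric]
        matrix_vector_mult_diff_distrib algebra_simps)
  then have "inner w (transpose M *v z + \<delta> *\<^sub>R w) = - \<delta> * inner w x" by simp
  moreover have "inner w (transpose M *v z) = (norm z)\<^sup>2"
    unfolding z_def power2_norm_eq_inner
    using inner_transpose_mv[of M "M *v w" w] by (simp add: inner_commute)
  moreover have "inner w x = inner z v"
    unfolding x z_def using inner_transpose_mv[of M v w] by (simp add: inner_commute)
  ultimately have key: "(norm z)\<^sup>2 + \<delta> * (norm w)\<^sup>2 = - \<delta> * inner z v"
    by (simp add: inner_add_right power2_norm_eq_inner)
  have cs: "- \<delta> * inner z v \<le> \<delta> * (norm z * norm v)"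
    using mult_left_mono[OF _ less_imp_le[OF \<delta>], of "- inner z v" "norm z * norm v"]
      Cauchy_Schwarz_ineq2[of z v] by simp
  have "(norm z)\<^sup>2 \<le> \<delta> * (norm z * norm v)"
    using key cs \<delta> by (smt (verit) mult_nonneg_nonneg zero_le_power2)
  then have nz: "norm z \<le> \<delta> * norm v"
    using \<delta> by (cases "norm z = 0") (auto simp: power2_eq_square mult_le_cancel_right mult_ac)
  have "\<delta> * (norm w)\<^sup>2 \<le> \<delta> * (norm z * norm v)"
    using key cs zero_le_power2[of "norm z"] by linarith
  also have "\<dots> \<le> \<delta> * (\<delta> * norm v * norm v)"
    using nz \<delta> by (simp add: mult_left_mono mult_right_mono)
  finally have "(norm w)\<^sup>2 \<le> \<delta> * (norm v)\<^sup>2"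
    using \<delta> by (simp add: power2_eq_square)
  also have "\<dots> = (sqrt \<delta> * norm v)\<^sup>2"
    using \<delta> by (simp add: power_mult_distrib)
  finally have "(norm w)\<^sup>2 \<le> (sqrt \<delta> * norm v)\<^sup>2" .
  then show ?thesis
    unfolding w_def x_def v_def by (rule power2_le_imp_le) (use \<delta> in simp)
qed

lemma borel_measurable_pinv[measurable]: "(pinv :: real^'b^'a \<Rightarrow> real^'a^'b) \<in> borel_measurable borel"
proof -
  define d :: "nat \<Rightarrow> real" where "d j = inverse (real (Suc j))" for j
  define T where "T j M = transpose M ** M + d j *\<^sub>R mat 1" for j and M :: "real^'b^'a"
  have d: "d j > 0" for j unfolding d_def by simp
  have "(\<lambda>M :: real^'b^'a. pinv M *v y) \<in> borel_measurable borel" for y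
  proof -
    define U where "U j M = (\<chi> k. det (\<chi> i l. if l = k then (transpose M *v y) $ i else T j M $ i $ l)
                                    / det (T j M))" for j M
    have U: "U j \<in> borel_measurable borel" for j
    proof (rule borel_measurable_vecI)
      fix k
      have "(\<lambda>M. \<chi> i l. if l = k then (transpose M *v y) $ i else T j M $ i $ l) \<in> borel_measurable borel"
        by (rule borel_measurable_vecI, rule borel_measurable_vecI, rename_tac i l,
            case_tac "l = k"; simp add: T_def; measurable)
      then show "(\<lambda>M. U j M $ k) \<in> borel_measurable borel"
        unfolding U_def T_def by simp measurable
    qed
    have lim: "(\<lambda>j. U j M) \<longlonglongrightarrow> pinv M *v y" for M
    proof -
      let ?c = "norm (transpose (pinv M) *v (pinv M *v y))"
      have "T j M *v U j M = transpose M *v y" for j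
        using cramer[OF det_tikhonov_nonzero[OF d, of M]] unfolding U_def T_def by simp
      then have bound: "norm (U j M - pinv M *v y) \<le> sqrt (d j) * ?c" for j
        unfolding T_def by (rule tikhonov_pinv_error[OF d])
      have "(\<lambda>j. sqrt (d j) * ?c) \<longlonglongrightarrow> 0"
        using tendsto_mult_right[OF tendsto_real_sqrt[OF LIMSEQ_inverse_real_of_nat], of ?c]
        unfolding d_def by simp
      then have "(\<lambda>j. U j M - pinv M *v y) \<longlonglongrightarrow> 0"
        by (rule Lim_null_comparison[OF always_eventually[OF allI[OF bound]]])
      then show ?thesis by (simp add: Lim_null[symmetric])
    qed
    show ?thesis by (rule borel_measurable_LIMSEQ_metric[OF U lim])
  qed
  then have "(\<lambda>M :: real^'b^'a. (pinv M *v axis b 1) $ a) \<in> borel_measurable borel" for a b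
    by (rule borel_measurable_vec_nth)
  then show ?thesis
    by (intro borel_measurable_vecI) (simp add: matrix_vector_mult_basis column_def)
qed

subsection \<open>Independence of the coordinates of an i.i.d.\ sequence\<close>

lemma integral_PiM_coordinate_times_past:
  fixes D :: "'a measure" and f :: "'a \<Rightarrow> real" and g :: "(nat \<Rightarrow> 'a) \<Rightarrow> real"
  assumes D: "prob_space D"
    and f: "f \<in> borel_measurable D" "\<And>s. \<bar>f s\<bar> \<le> cf"
    and g: "g \<in> borel_measurable (PiM {..<k} (\<lambda>_. D))" "\<And>\<omega>. \<bar>g \<omega>\<bar> \<le> cg"
  shows "(\<integral>\<omega>. f (\<omega> k) * g (restrict \<omega> {..<k}) \<partial>PiM UNIV (\<lambda>_. D))
         = (\<integral>s. f s \<partial>D) * (\<integral>\<omega>. g (restrict \<omega> {..<k}) \<partial>PiM UNIV (\<lambda>_. D))"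
proof -
  let ?\<Omega> = "PiM UNIV (\<lambda>_::nat. D)"
  interpret \<Omega>: prob_space ?\<Omega> by (rule prob_space_PiM) (rule D)
  have prod: "product_prob_space (\<lambda>_::nat. D)"
    by (simp add: product_prob_space_def product_prob_space_axioms_def product_sigma_finite_def
          prob_space_imp_sigma_finite D)
  have coord: "(\<lambda>\<omega>. \<omega> i) \<in> measurable ?\<Omega> D" for i
    by (rule measurable_component_singleton) simp
  have distr_coord: "distr ?\<Omega> D (\<lambda>\<omega>. \<omega> i) = D" for i
    by (rule product_prob_space.PiM_component[OF prod]) simp
  have "\<Omega>.indep_vars (\<lambda>_. D) (\<lambda>i \<omega>. \<omega> i) UNIV"
    using \<Omega>.indep_vars_iff_distr_eq_PiM[where I=UNIV and M'="\<lambda>_. D" and X="\<lambda>i \<omega>. \<omega> i"] coord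
    by (simp add: distr_coord distr_id[unfolded id_def] restrict_UNIV)
  then have past: "\<Omega>.indep_var (PiM {k} (\<lambda>_. D)) (\<lambda>\<omega>. restrict \<omega> {k})
                          (PiM {..<k} (\<lambda>_. D)) (\<lambda>\<omega>. restrict \<omega> {..<k})"
    by (intro \<Omega>.indep_var_restrict) auto
  have "(\<lambda>r. f (r k)) \<in> borel_measurable (PiM {k} (\<lambda>_. D))"
    using measurable_compose[OF measurable_component_singleton[of k "{k}" "\<lambda>_. D"] f(1)] by simp
  from \<Omega>.indep_var_compose[OF past this g(1)]
  have "\<Omega>.indep_var borel (\<lambda>\<omega>. f (\<omega> k)) borel (\<lambda>\<omega>. g (restrict \<omega> {..<k}))"
    by (simp add: comp_def)
  moreover have "integrable ?\<Omega> (\<lambda>\<omega>. f (\<omega> k))"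
    using measurable_compose[OF coord f(1)] f(2)
    by (intro \<Omega>.integrable_const_bound[where B=cf]) auto
  moreover have "integrable ?\<Omega> (\<lambda>\<omega>. g (restrict \<omega> {..<k}))"
    using measurable_compose[OF measurable_restrict_subset[of "{..<k}" UNIV "\<lambda>_. D"] g(1)] g(2)
    by (intro \<Omega>.integrable_const_bound[where B=cg]) auto
  ultimately have "(\<integral>\<omega>. f (\<omega> k) * g (restrict \<omega> {..<k}) \<partial>?\<Omega>)
        = (\<integral>\<omega>. f (\<omega> k) \<partial>?\<Omega>) * (\<integral>\<omega>. g (restrict \<omega> {..<k}) \<partial>?\<Omega>)"
    by (rule \<Omega>.indep_var_lebesgue_integral)
  moreover have "(\<integral>\<omega>. f (\<omega> k) \<partial>?\<Omega>) = (\<integral>s. f s \<partial>D)"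
    using integral_distr[OF coord f(1)] by (simp add: distr_coord)
  ultimately show ?thesis by simp
qed

lemma bilinear_basis_expansion:
  fixes h :: "'a::euclidean_space \<Rightarrow> 'b::euclidean_space \<Rightarrow> 'c::real_vector"
  assumes h: "bilinear h"
  shows "h x y = (\<Sum>b\<in>Basis. \<Sum>c\<in>Basis. ((x \<bullet> b) * (y \<bullet> c)) *\<^sub>R h b c)"
proof -
  have "h x y = h (\<Sum>b\<in>Basis. (x \<bullet> b) *\<^sub>R b) (\<Sum>c\<in>Basis. (y \<bullet> c) *\<^sub>R c)"
    by (simp add: euclidean_representation)
  also have "\<dots> = (\<Sum>(b, c)\<in>Basis \<times> Basis. h ((x \<bullet> b) *\<^sub>R b) ((y \<bullet> c) *\<^sub>R c))"
    by (rule bilinear_sum[OF h])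
  also have "\<dots> = (\<Sum>b\<in>Basis. \<Sum>c\<in>Basis. ((x \<bullet> b) * (y \<bullet> c)) *\<^sub>R h b c)"
    by (simp add: sum.cartesian_product bilinear_lmul[OF h] bilinear_rmul[OF h] mult.commute)
  finally show ?thesis .
qed

lemma integral_PiM_bilinear_coordinate_past:
  fixes D :: "'a measure" and f :: "'a \<Rightarrow> 'b::euclidean_space"
    and g :: "(nat \<Rightarrow> 'a) \<Rightarrow> 'c::euclidean_space" and h :: "'b \<Rightarrow> 'c \<Rightarrow> 'd::euclidean_space"
  assumes D: "prob_space D" and h: "bilinear h"
    and f: "f \<in> borel_measurable D" "\<And>s. norm (f s) \<le> cf"
    and g: "g \<in> borel_measurable (PiM {..<k} (\<lambda>_. D))" "\<And>\<omega>. norm (g \<omega>) \<le> cg"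
  shows "(\<integral>\<omega>. h (f (\<omega> k)) (g (restrict \<omega> {..<k})) \<partial>PiM UNIV (\<lambda>_. D))
         = h (\<integral>s. f s \<partial>D) (\<integral>\<omega>. g (restrict \<omega> {..<k}) \<partial>PiM UNIV (\<lambda>_. D))"
proof -
  let ?\<Omega> = "PiM UNIV (\<lambda>_::nat. D)"
  interpret \<Omega>: prob_space ?\<Omega> by (rule prob_space_PiM) (rule D)
  interpret D: prob_space D by (rule D)
  let ?F = "\<lambda>\<omega>. f (\<omega> k)" and ?G = "\<lambda>\<omega>. g (restrict \<omega> {..<k})"
  have Fm: "?F \<in> borel_measurable ?\<Omega>"
    using measurable_compose[OF measurable_component_singleton[of k UNIV "\<lambda>_. D"] f(1)] by simp
  have Gm: "?G \<in> borel_measurable ?\<Omega>"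
    using measurable_compose[OF measurable_restrict_subset[of "{..<k}" UNIV "\<lambda>_. D"] g(1)] by simp
  have bound_inner: "\<bar>x \<bullet> b\<bar> \<le> c" if "norm x \<le> c" "b \<in> Basis" for x :: "'e::euclidean_space" and b c
    using Basis_le_norm[OF that(2), of x] that(1) by linarith
  have int_f: "integrable D f" using f by (intro D.integrable_const_bound[where B=cf]) auto
  have int_G: "integrable ?\<Omega> ?G" using Gm g(2) by (intro \<Omega>.integrable_const_bound[where B=cg]) auto
  have int_FG: "integrable ?\<Omega> (\<lambda>\<omega>. (?F \<omega> \<bullet> b) * (?G \<omega> \<bullet> c))" if "b \<in> Basis" "c \<in> Basis" for b c
  proof (intro \<Omega>.integrable_const_bound[where B="cf * cg"] always_eventually allI)
    fix \<omega>
    have "\<bar>?F \<omega> \<bullet> b\<bar> \<le> cf" "\<bar>?G \<omega> \<bullet> c\<bar> \<le> cg"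
      using bound_inner[OF f(2) that(1)] bound_inner[OF g(2) that(2)] by auto
    then show "norm ((?F \<omega> \<bullet> b) * (?G \<omega> \<bullet> c)) \<le> cf * cg"
      unfolding real_norm_def abs_mult by (intro mult_mono) (auto elim: order_trans[OF abs_ge_zero])
  qed (use Fm Gm in measurable)
  have factor: "(\<integral>\<omega>. (?F \<omega> \<bullet> b) * (?G \<omega> \<bullet> c) \<partial>?\<Omega>) = (\<integral>s. f s \<bullet> b \<partial>D) * (\<integral>\<omega>. ?G \<omega> \<bullet> c \<partial>?\<Omega>)"
    if "b \<in> Basis" "c \<in> Basis" for b c
  proof (rule integral_PiM_coordinate_times_past[OF D, where cf=cf and cg=cg])
    show "(\<lambda>s. f s \<bullet> b) \<in> borel_measurable D" using f(1) by measurable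
    show "(\<lambda>\<omega>. g \<omega> \<bullet> c) \<in> borel_measurable (PiM {..<k} (\<lambda>_. D))" using g(1) by measurable
  qed (rule bound_inner[OF f(2) that(1)], rule bound_inner[OF g(2) that(2)])
  have "(\<integral>\<omega>. h (?F \<omega>) (?G \<omega>) \<partial>?\<Omega>)
      = (\<integral>\<omega>. (\<Sum>b\<in>Basis. \<Sum>c\<in>Basis. ((?F \<omega> \<bullet> b) * (?G \<omega> \<bullet> c)) *\<^sub>R h b c) \<partial>?\<Omega>)"
    by (intro Bochner_Integration.integral_cong refl bilinear_basis_expansion[OF h])
  also have "\<dots> = (\<Sum>b\<in>Basis. \<Sum>c\<in>Basis. (\<integral>\<omega>. (?F \<omega> \<bullet> b) * (?G \<omega> \<bullet> c) \<partial>?\<Omega>) *\<^sub>R h b c)"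
    using int_FG by (simp add: Bochner_Integration.integral_sum Bochner_Integration.integrable_sum)
  also have "\<dots> = (\<Sum>b\<in>Basis. \<Sum>c\<in>Basis. ((\<integral>s. f s \<partial>D) \<bullet> b * ((\<integral>\<omega>. ?G \<omega> \<partial>?\<Omega>) \<bullet> c)) *\<^sub>R h b c)"
    using int_f int_G by (simp add: factor)
  also have "\<dots> = h (\<integral>s. f s \<partial>D) (\<integral>\<omega>. ?G \<omega> \<partial>?\<Omega>)"
    by (rule bilinear_basis_expansion[OF h, symmetric])
  finally show ?thesis .
qed

lemma bilinear_matrix_mult: "bilinear ((**) :: real^'k^'n \<Rightarrow> real^'m^'k \<Rightarrow> real^'m^'n)"
  unfolding bilinear_def
  by (auto intro!: linearI simp: vec_eq_iff matrix_matrix_mult_def sum.distrib sum_distrib_left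
      algebra_simps)

subsection \<open>The sketch-and-project iteration\<close>

definition sketch_proj :: "real^'n^'m \<Rightarrow> real^'t^'n \<Rightarrow> real^'n^'n" where
  "sketch_proj A S = transpose A ** A ** sketch_H A S ** transpose A ** A"

text \<open>\<open>A\<^sup>TA H\<^sub>S A\<^sup>TA\<close> is the orthogonal projection onto \<open>Range(A\<^sup>TA S)\<close>.\<close>

lemma sketch_proj_eq_range_projection:
  "sketch_proj A S = (transpose A ** A ** S)
     ** pinv (transpose (transpose A ** A ** S) ** (transpose A ** A ** S)) ** transpose (transpose A ** A ** S)"
  unfolding sketch_proj_def sketch_H_def by (simp add: matrix_mul_assoc matrix_transpose_mul)

lemma symmetric_sketch_proj: "transpose (sketch_proj A S) = sketch_proj A S"
  unfolding sketch_proj_eq_range_projection by (rule symmetric_range_projection)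

lemma idempotent_sketch_proj: "sketch_proj A S ** sketch_proj A S = sketch_proj A S"
  unfolding sketch_proj_eq_range_projection by (rule idempotent_range_projection)

lemma borel_measurable_sketch_proj[measurable]: "sketch_proj A \<in> borel_measurable borel"
  unfolding sketch_proj_def sketch_H_def by measurable

lemma borel_measurable_sketch_proj_sets_borel:
  fixes D :: "(real^'t^'n) measure" and A :: "real^'n^'m"
  assumes "sets D = sets borel"
  shows "sketch_proj A \<in> borel_measurable D"
  using borel_measurable_sketch_proj measurable_cong_sets[OF assms refl] by blast

lemma pinv_iter_error_Suc:
  "pinv_iter A X0 (Suc k) \<omega> - pinv A = (mat 1 - sketch_proj A (\<omega> k)) ** (pinv_iter A X0 k \<omega> - pinv A)"
proof -
  let ?X = "pinv_iter A X0 k \<omega>"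
  have "transpose A ** (A ** ?X - mat 1) = transpose A ** A ** (?X - pinv A)"
    using transpose_mult_pinv[of A]
    by (simp add: matrix_eq matrix_vector_mul_assoc[symmetric] matrix_vector_mult_diff_rdistrib
        matrix_vector_mult_diff_distrib)
  then have "pinv_iter A X0 (Suc k) \<omega> = ?X - sketch_proj A (\<omega> k) ** (?X - pinv A)"
    by (simp add: sketch_proj_def sketch_H_def matrix_mul_assoc[symmetric])
  then show ?thesis
    by (simp add: matrix_eq matrix_vector_mul_assoc[symmetric] matrix_vector_mult_diff_rdistrib)
qed

lemma pinv_iter_restrict: "pinv_iter A X0 k (restrict \<omega> {..<k}) = pinv_iter A X0 k \<omega>"
proof -
  have "(\<forall>j<k. \<omega>' j = \<omega> j) \<Longrightarrow> pinv_iter A X0 k \<omega>' = pinv_iter A X0 k \<omega>" for \<omega>'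
    by (induction k) auto
  from this[of "restrict \<omega> {..<k}"] show ?thesis by simp
qed

lemma borel_measurable_pinv_iter:
  fixes D :: "(real^'t^'n) measure"
  assumes "sets D = sets borel" and "{..<k} \<subseteq> I"
  shows "pinv_iter A X0 k \<in> borel_measurable (PiM I (\<lambda>_. D))"
  using assms(2)
proof (induction k)
  case (Suc k)
  from Suc.prems have "k \<in> I" "{..<k} \<subseteq> I" by auto
  have "(\<lambda>\<omega>. sketch_proj A (\<omega> k)) \<in> borel_measurable (PiM I (\<lambda>_. D))"
    using measurable_compose[OF measurable_component_singleton[OF \<open>k \<in> I\<close>]
        borel_measurable_sketch_proj_sets_borel[OF assms(1), of A]]
    by simp
  with Suc.IH[OF \<open>{..<k} \<subseteq> I\<close>]
  have m: "(\<lambda>\<omega>. (mat 1 - sketch_proj A (\<omega> k)) ** (pinv_iter A X0 k \<omega> - pinv A) + pinv A)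
          \<in> borel_measurable (PiM I (\<lambda>_. D))"
    by measurable
  have eq: "pinv_iter A X0 (Suc k)
      = (\<lambda>\<omega>. (mat 1 - sketch_proj A (\<omega> k)) ** (pinv_iter A X0 k \<omega> - pinv A) + pinv A)"
    by (intro ext) (rule pinv_iter_error_Suc[unfolded diff_eq_eq])
  show ?case unfolding eq by (rule m)
next
  case 0
  have "pinv_iter A X0 0 = (\<lambda>_. X0)" by (simp add: fun_eq_iff)
  then show ?case by simp
qed

lemma norm_pinv_iter_error_le: "norm (pinv_iter A X0 k \<omega> - pinv A) \<le> norm (X0 - pinv A)"
proof (induction k)
  case (Suc k)
  then show ?case
    unfolding pinv_iter_error_Suc
    using norm_complement_projection_le[OF symmetric_sketch_proj idempotent_sketch_proj] order_trans
    by blast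
qed simp

lemma pinv_iter_error_in_range:
  assumes "col_range X0 \<subseteq> col_range (transpose A ** A)"
  shows "(pinv_iter A X0 k \<omega> - pinv A) *v x \<in> range (\<lambda>z. (transpose A ** A) *v z)"
proof (induction k arbitrary: x)
  let ?V = "range (\<lambda>z. (transpose A ** A) *v z)"
  note V = subspace_range_mv[of "transpose A ** A"]
  case 0
  have "X0 *v x \<in> ?V" using assms unfolding col_range_def by blast
  moreover have "pinv A = (transpose A ** A) ** (pinv A ** transpose (pinv A) ** pinv A)"
    by (subst pinv_eq_transpose_mult) (metis matrix_mul_assoc transpose_mult_pinv)
  then have "pinv A *v x \<in> ?V" by (metis matrix_vector_mul_assoc rangeI)
  ultimately show ?case using V by (simp add: matrix_vector_mult_diff_rdistrib subspace_diff)
next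
  let ?V = "range (\<lambda>z. (transpose A ** A) *v z)"
  note V = subspace_range_mv[of "transpose A ** A"]
  case (Suc k)
  let ?R = "pinv_iter A X0 k \<omega> - pinv A"
  have "sketch_proj A (\<omega> k) *v (?R *v x)
        = (transpose A ** A) *v ((sketch_H A (\<omega> k) ** transpose A ** A) *v (?R *v x))"
    by (simp add: sketch_proj_def matrix_vector_mul_assoc matrix_mul_assoc)
  then have "?R *v x - sketch_proj A (\<omega> k) *v (?R *v x) \<in> ?V"
    using Suc V by (metis rangeI subspace_diff)
  then show ?case unfolding pinv_iter_error_Suc
    by (simp add: matrix_vector_mul_assoc[symmetric] matrix_vector_mult_diff_rdistrib)
qed

subsection \<open>Expected error dynamics\<close>

lemma expected_pinv_iter_error_Suc:
  fixes A :: "real^'n^'m" and X0 :: "real^'m^'n" and D :: "(real^'t^'n) measure"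
  assumes D: "prob_space D" and sD: "sets D = sets borel"
  shows "(\<integral>\<omega>. (pinv_iter A X0 (Suc k) \<omega> - pinv A) \<partial>PiM UNIV (\<lambda>_. D))
       = (\<integral>S. (mat 1 - sketch_proj A S) \<partial>D) ** (\<integral>\<omega>. (pinv_iter A X0 k \<omega> - pinv A) \<partial>PiM UNIV (\<lambda>_. D))"
proof -
  have "(\<integral>\<omega>. (pinv_iter A X0 (Suc k) \<omega> - pinv A) \<partial>PiM UNIV (\<lambda>_. D))
      = (\<integral>\<omega>. (mat 1 - sketch_proj A (\<omega> k)) ** (pinv_iter A X0 k (restrict \<omega> {..<k}) - pinv A)
           \<partial>PiM UNIV (\<lambda>_. D))"
    by (simp only: pinv_iter_error_Suc pinv_iter_restrict)
  also have "\<dots> = (\<integral>S. (mat 1 - sketch_proj A S) \<partial>D)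
      ** (\<integral>\<omega>. (pinv_iter A X0 k (restrict \<omega> {..<k}) - pinv A) \<partial>PiM UNIV (\<lambda>_. D))"
  proof (rule integral_PiM_bilinear_coordinate_past[OF D bilinear_matrix_mult])
    show "(\<lambda>S. mat 1 - sketch_proj A S) \<in> borel_measurable D"
      using borel_measurable_sketch_proj_sets_borel[OF sD] by measurable
    show "norm (mat 1 - sketch_proj A S) \<le> norm (mat 1 :: real^'n^'n)" for S
      using norm_complement_projection_le[OF symmetric_sketch_proj idempotent_sketch_proj, of A S "mat 1"]
      by simp
    show "(\<lambda>\<omega>. pinv_iter A X0 k \<omega> - pinv A) \<in> borel_measurable (PiM {..<k} (\<lambda>_. D))"
      using borel_measurable_pinv_iter[OF sD order_refl, of A X0] by measurable
  qed (rule norm_pinv_iter_error_le)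
  finally show ?thesis by (simp only: pinv_iter_restrict)
qed

lemma norm_transpose: "norm (transpose X) = norm (X :: real^'m^'n)"
  by (simp add: norm_eq_sqrt_inner inner_transpose_transpose)

lemma bounded_outer_pinv_iter_error:
  fixes A :: "real^'n^'m" and X0 :: "real^'m^'n"
  shows "\<exists>B. \<forall>\<omega> :: nat \<Rightarrow> real^'t^'n.
           norm ((pinv_iter A X0 k \<omega> - pinv A) ** transpose (pinv_iter A X0 k \<omega> - pinv A)) \<le> B"
proof -
  obtain K where "K \<ge> 0" and K: "\<And>X Y. norm (X ** Y :: real^'n^'n) \<le> norm (X :: real^'m^'n) * norm Y * K"
    using bounded_bilinear.nonneg_bounded[OF bilinear_conv_bounded_bilinear[THEN iffD1, OF bilinear_matrix_mult]]
    by blast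
  have "norm ((pinv_iter A X0 k \<omega> - pinv A) ** transpose (pinv_iter A X0 k \<omega> - pinv A))
        \<le> norm (X0 - pinv A) * norm (X0 - pinv A) * K" for \<omega> :: "nat \<Rightarrow> real^'t^'n"
  proof -
    have "norm ((pinv_iter A X0 k \<omega> - pinv A) ** transpose (pinv_iter A X0 k \<omega> - pinv A))
        \<le> norm (pinv_iter A X0 k \<omega> - pinv A) * norm (pinv_iter A X0 k \<omega> - pinv A) * K"
      using K[of _ "transpose (pinv_iter A X0 k \<omega> - pinv A)"] by (simp only: norm_transpose)
    also have "\<dots> \<le> norm (X0 - pinv A) * norm (X0 - pinv A) * K"
      using norm_pinv_iter_error_le \<open>K \<ge> 0\<close> by (intro mult_right_mono mult_mono) auto
    finally show ?thesis .
  qed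
  then show ?thesis by blast
qed

text \<open>Independence of \<open>S\<^sub>k\<close> and \<open>R\<^sub>k\<close> enters through the outer product
  \<open>\<langle>R, P R\<rangle> = \<langle>P, R R\<^sup>T\<rangle>\<close>, which is bilinear in \<open>P\<close> and \<open>R R\<^sup>T\<close>.\<close>

lemma expected_norm2_sketch_proj_pinv_iter_error:
  fixes A :: "real^'n^'m" and X0 :: "real^'m^'n" and D :: "(real^'t^'n) measure" and G :: "real^'n^'n"
  assumes D: "prob_space D" and sD: "sets D = sets borel" and G: "(\<integral>S. sketch_proj A S \<partial>D) = G"
  shows "integrable (PiM UNIV (\<lambda>_. D))
           (\<lambda>\<omega>. inner (pinv_iter A X0 k \<omega> - pinv A) (G ** (pinv_iter A X0 k \<omega> - pinv A)))"
    and "(\<integral>\<omega>. (norm (sketch_proj A (\<omega> k) ** (pinv_iter A X0 k \<omega> - pinv A)))\<^sup>2 \<partial>PiM UNIV (\<lambda>_. D))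
         = (\<integral>\<omega>. inner (pinv_iter A X0 k \<omega> - pinv A) (G ** (pinv_iter A X0 k \<omega> - pinv A))
              \<partial>PiM UNIV (\<lambda>_. D))"
proof -
  let ?\<Omega> = "PiM UNIV (\<lambda>_::nat. D)"
  define R where "R = (\<lambda>\<omega> :: nat \<Rightarrow> real^'t^'n. pinv_iter A X0 k \<omega> - pinv A)"
  interpret \<Omega>: prob_space ?\<Omega> by (rule prob_space_PiM) (rule D)
  define W where "W = (\<lambda>\<omega>. R \<omega> ** transpose (R \<omega>))"
  obtain B where W_bound: "\<And>\<omega>. norm (W \<omega>) \<le> B"
    using bounded_outer_pinv_iter_error[of A X0 k] unfolding W_def R_def by blast
  have Rm: "R \<in> borel_measurable (PiM {..<k} (\<lambda>_. D))" "R \<in> borel_measurable ?\<Omega>"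
    using borel_measurable_pinv_iter[OF sD order_refl, of A X0 k]
      borel_measurable_pinv_iter[OF sD subset_UNIV, of A X0 k]
    by (simp_all add: R_def)
  have Wm: "W \<in> borel_measurable (PiM {..<k} (\<lambda>_. D))" "W \<in> borel_measurable ?\<Omega>"
    unfolding W_def by (intro borel_measurable_matrix_mult borel_measurable_transpose Rm)+
  have int_W: "integrable ?\<Omega> W"
    using Wm(2) W_bound
    by (intro \<Omega>.integrable_const_bound[where B=B] always_eventually allI) auto
  have outer: "inner P (W \<omega>) = inner (R \<omega>) (P ** R \<omega>)" for P \<omega>
    unfolding W_def by (rule inner_matrix_mult_right[symmetric])
  have W_restrict: "W (restrict \<omega> {..<k}) = W \<omega>" for \<omega>
    by (simp add: W_def R_def pinv_iter_restrict)
  show "integrable ?\<Omega> (\<lambda>\<omega>. inner (pinv_iter A X0 k \<omega> - pinv A) (G ** (pinv_iter A X0 k \<omega> - pinv A)))"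
    using integrable_inner_right[OF int_W, of G] by (simp add: outer R_def)
  have "(\<integral>\<omega>. (norm (sketch_proj A (\<omega> k) ** R \<omega>))\<^sup>2 \<partial>?\<Omega>)
      = (\<integral>\<omega>. inner (sketch_proj A (\<omega> k)) (W (restrict \<omega> {..<k})) \<partial>?\<Omega>)"
    unfolding W_restrict outer
    by (simp add: inner_projection_eq_norm2[OF symmetric_sketch_proj idempotent_sketch_proj])
  also have "\<dots> = inner G (\<integral>\<omega>. W (restrict \<omega> {..<k}) \<partial>?\<Omega>)"
  proof (subst G[symmetric], rule integral_PiM_bilinear_coordinate_past[OF D])
    show "bilinear (inner :: real^'n^'n \<Rightarrow> _)"
      by (simp add: bilinear_conv_bounded_bilinear bounded_bilinear_inner)
    show "norm (sketch_proj A S) \<le> norm (mat 1 :: real^'n^'n)" for S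
      using norm_projection_le[OF symmetric_sketch_proj idempotent_sketch_proj, of A S "mat 1"] by simp
  qed (rule borel_measurable_sketch_proj_sets_borel[OF sD], rule Wm(1), rule W_bound)
  also have "\<dots> = (\<integral>\<omega>. inner G (W \<omega>) \<partial>?\<Omega>)"
    using int_W by (simp add: W_restrict)
  finally show "(\<integral>\<omega>. (norm (sketch_proj A (\<omega> k) ** (pinv_iter A X0 k \<omega> - pinv A)))\<^sup>2 \<partial>?\<Omega>)
      = (\<integral>\<omega>. inner (pinv_iter A X0 k \<omega> - pinv A) (G ** (pinv_iter A X0 k \<omega> - pinv A)) \<partial>?\<Omega>)"
    by (simp only: outer R_def)
qed

lemma expected_sq_pinv_iter_error_Suc_le:
  fixes A :: "real^'n^'m" and X0 :: "real^'m^'n" and D :: "(real^'t^'n) measure" and G :: "real^'n^'n"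
  assumes D: "prob_space D" and sD: "sets D = sets borel"
    and G: "(\<integral>S. sketch_proj A S \<partial>D) = G" "transpose G = G"
    and range: "\<And>k (\<omega> :: nat \<Rightarrow> real^'t^'n) x. (pinv_iter A X0 k \<omega> - pinv A) *v x \<in> range (\<lambda>z. G *v z)"
  shows "(\<integral>\<omega>. (norm (pinv_iter A X0 (Suc k) \<omega> - pinv A))\<^sup>2 \<partial>PiM UNIV (\<lambda>_. D))
         \<le> (1 - lambda_min_plus G) * (\<integral>\<omega>. (norm (pinv_iter A X0 k \<omega> - pinv A))\<^sup>2 \<partial>PiM UNIV (\<lambda>_. D))"
proof -
  let ?\<Omega> = "PiM UNIV (\<lambda>_::nat. D)"
  interpret \<Omega>: prob_space ?\<Omega> by (rule prob_space_PiM) (rule D)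
  define R where "R = (\<lambda>\<omega> :: nat \<Rightarrow> real^'t^'n. pinv_iter A X0 k \<omega> - pinv A)"
  let ?PR = "\<lambda>\<omega>. (norm (sketch_proj A (\<omega> k) ** R \<omega>))\<^sup>2"
  note proj = symmetric_sketch_proj idempotent_sketch_proj
  note cross = expected_norm2_sketch_proj_pinv_iter_error[OF D sD G(1)]
  define c where "c = norm (X0 - pinv A)"
  have R_bound: "norm (R \<omega>) \<le> c" for \<omega> unfolding R_def c_def by (rule norm_pinv_iter_error_le)
  have Rm: "R \<in> borel_measurable ?\<Omega>"
    using borel_measurable_pinv_iter[OF sD subset_UNIV, of A X0 k] by (simp add: R_def)
  have int_R2: "integrable ?\<Omega> (\<lambda>\<omega>. (norm (R \<omega>))\<^sup>2)"
    using Rm R_bound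
    by (intro \<Omega>.integrable_const_bound[where B="c\<^sup>2"] always_eventually allI) (auto intro: power_mono)
  have "(\<lambda>\<omega>. sketch_proj A (\<omega> k)) \<in> borel_measurable ?\<Omega>"
    using measurable_compose[OF measurable_component_singleton[of k UNIV "\<lambda>_. D"]
        borel_measurable_sketch_proj_sets_borel[OF sD, of A]]
    by simp
  then have int_PR: "integrable ?\<Omega> ?PR"
    using Rm
    by (intro \<Omega>.integrable_const_bound[where B="c\<^sup>2"] always_eventually allI
        borel_measurable_power borel_measurable_norm borel_measurable_matrix_mult)
       (auto intro!: power_mono intro: order_trans[OF norm_projection_le[OF proj] R_bound])
  have "(\<integral>\<omega>. (norm (pinv_iter A X0 (Suc k) \<omega> - pinv A))\<^sup>2 \<partial>?\<Omega>)
      = (\<integral>\<omega>. (norm (R \<omega>))\<^sup>2 - ?PR \<omega> \<partial>?\<Omega>)"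
    unfolding pinv_iter_error_Suc R_def
    by (simp only: norm2_complement_projection[OF proj] inner_projection_eq_norm2[OF proj])
  also have "\<dots> = (\<integral>\<omega>. (norm (R \<omega>))\<^sup>2 - inner (R \<omega>) (G ** R \<omega>) \<partial>?\<Omega>)"
    using int_R2 int_PR cross unfolding R_def by simp
  also have "\<dots> \<le> (\<integral>\<omega>. (1 - lambda_min_plus G) * (norm (R \<omega>))\<^sup>2 \<partial>?\<Omega>)"
  proof (rule integral_mono)
    show "integrable ?\<Omega> (\<lambda>\<omega>. (norm (R \<omega>))\<^sup>2 - inner (R \<omega>) (G ** R \<omega>))"
      using int_R2 cross(1) unfolding R_def by (rule Bochner_Integration.integrable_diff)
    show "integrable ?\<Omega> (\<lambda>\<omega>. (1 - lambda_min_plus G) * (norm (R \<omega>))\<^sup>2)"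
      using int_R2 by (rule Bochner_Integration.integrable_mult_right)
    have "lambda_min_plus G * (norm (R \<omega>))\<^sup>2 \<le> inner (R \<omega>) (G ** R \<omega>)" for \<omega>
      unfolding R_def by (intro lambda_min_plus_le_rayleigh_matrix G(2) range)
    then show "(norm (R \<omega>))\<^sup>2 - inner (R \<omega>) (G ** R \<omega>) \<le> (1 - lambda_min_plus G) * (norm (R \<omega>))\<^sup>2"
      for \<omega>
      by (simp add: left_diff_distrib)
  qed
  finally show ?thesis by (simp add: R_def)
qed

lemma linear_matrix_sandwich: "linear (\<lambda>H :: real^'k^'n. L ** H ** (N :: real^'m^'k))"
proof -
  have "linear (\<lambda>H. L ** H)" "linear (\<lambda>X :: real^'k^_. X ** N)"
    using bilinear_matrix_mult unfolding bilinear_def by auto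
  then show ?thesis using linear_compose[of "\<lambda>H. L ** H" "\<lambda>X. X ** N"] by (simp add: o_def)
qed

lemma range_sandwich_pos_def:
  fixes C H :: "real^'n^'n"
  assumes C: "transpose C = C" and H: "pos_def H"
  shows "C *v z \<in> range (\<lambda>x. (C ** H ** C) *v x)"
proof (rule range_subset_if_kernel_subset[OF _ C])
  show "transpose (C ** H ** C) = C ** H ** C"
    using C H by (simp add: pos_def_def matrix_transpose_mul matrix_mul_assoc)
  show "C *v x = 0" if "(C ** H ** C) *v x = 0" for x
  proof (rule ccontr)
    assume "C *v x \<noteq> 0"
    then have "0 < inner (C *v x) (H *v (C *v x))" using H by (simp add: pos_def_def)
    also have "\<dots> = inner x ((C ** H ** C) *v x)"
      by (simp add: inner_symmetric_mv[OF C] matrix_vector_mul_assoc[symmetric])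
    finally show False using that by simp
  qed
qed

lemma geometric_decay:
  fixes E :: "nat \<Rightarrow> real"
  assumes nonneg: "\<And>k. 0 \<le> E k" and step: "\<And>k. E (Suc k) \<le> \<rho> * E k"
  shows "E k \<le> \<rho> ^ k * E 0"
proof (cases "\<rho> \<ge> 0")
  case True
  show ?thesis
  proof (induction k)
    case (Suc k)
    have "E (Suc k) \<le> \<rho> * E k" by (rule step)
    also have "\<dots> \<le> \<rho> * (\<rho> ^ k * E 0)" using Suc True by (rule mult_left_mono)
    finally show ?case by simp
  qed simp
next
  case False
  text \<open>A negative rate forces the sequence to vanish.\<close>
  have "0 \<le> \<rho> * E 0" using nonneg[of 1] step[of 0] by simp
  then have "E 0 = 0" using False nonneg[of 0] by (simp add: zero_le_mult_iff)
  have "E k = 0" for k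
  proof (induction k)
    case (Suc k)
    then show ?case using step[of k] nonneg[of "Suc k"] by simp
  qed (fact \<open>E 0 = 0\<close>)
  then show ?thesis by simp
qed

lemma expected_sq_pinv_iter_error_le:
  fixes A :: "real^'n^'m" and X0 :: "real^'m^'n" and D :: "(real^'t^'n) measure"
  assumes D: "prob_space D" and sD: "sets D = sets borel"
    and X0: "col_range X0 \<subseteq> col_range (transpose A ** A)"
    and H: "integrable D (sketch_H A)" "pos_def (\<integral>S. sketch_H A S \<partial>D)"
  shows "(\<integral>\<omega>. (norm (pinv_iter A X0 k \<omega> - pinv A))\<^sup>2 \<partial>PiM UNIV (\<lambda>_. D))
         \<le> (1 - lambda_min_plus (transpose A ** A ** (\<integral>S. sketch_H A S \<partial>D) ** transpose A ** A)) ^ k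
            * (norm (X0 - pinv A))\<^sup>2"
proof -
  let ?\<Omega> = "PiM UNIV (\<lambda>_::nat. D)"
  let ?C = "transpose A ** A" and ?H = "\<integral>S. sketch_H A S \<partial>D"
  let ?G = "transpose A ** A ** ?H ** transpose A ** A"
  have sandwich: "transpose A ** A ** M ** transpose A ** A = ?C ** M ** ?C" for M :: "real^'n^'n"
    by (simp add: matrix_mul_assoc)
  have "(\<integral>S. ?C ** sketch_H A S ** ?C \<partial>D) = ?C ** ?H ** ?C"
    using integral_bounded_linear[OF linear_matrix_sandwich[of ?C ?C, unfolded linear_conv_bounded_linear] H(1)]
    by simp
  then have EG: "(\<integral>S. sketch_proj A S \<partial>D) = ?G"
    by (simp only: sketch_proj_def sandwich)
  have C: "transpose ?C = ?C" by (simp add: matrix_transpose_mul)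
  have G: "transpose ?G = ?G"
    using H(2) C unfolding sandwich pos_def_def by (simp add: matrix_transpose_mul matrix_mul_assoc)
  have range: "(pinv_iter A X0 k \<omega> - pinv A) *v x \<in> range (\<lambda>z. ?G *v z)" for k \<omega> x
  proof -
    obtain z where "(pinv_iter A X0 k \<omega> - pinv A) *v x = ?C *v z"
      using pinv_iter_error_in_range[OF X0] by blast
    then show ?thesis unfolding sandwich using range_sandwich_pos_def[OF C H(2)] by simp
  qed
  interpret \<Omega>: prob_space ?\<Omega> by (rule prob_space_PiM) (rule D)
  define E where "E k = (\<integral>\<omega>. (norm (pinv_iter A X0 k \<omega> - pinv A))\<^sup>2 \<partial>?\<Omega>)" for k
  have decay: "E k \<le> (1 - lambda_min_plus ?G) ^ k * E 0"
  proof (rule geometric_decay)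
    show "0 \<le> E k" for k unfolding E_def by simp
    show "E (Suc k) \<le> (1 - lambda_min_plus ?G) * E k" for k
      unfolding E_def by (rule expected_sq_pinv_iter_error_Suc_le[OF D sD EG G range])
  qed
  moreover have "E 0 = (norm (X0 - pinv A))\<^sup>2" unfolding E_def by (simp add: \<Omega>.prob_space)
  ultimately show ?thesis unfolding E_def by (simp only:)
qed

theorem theorem2:
  fixes A :: "real^'n^'m" and X0 :: "real^'m^'n" and D :: "(real^'t^'n) measure"
  assumes "prob_space D"
    and "sets D = sets borel"
    and "col_range X0 \<subseteq> col_range (transpose A ** A)"
  shows "(\<forall>k. (\<integral>\<omega>. (pinv_iter A X0 (Suc k) \<omega> - pinv A) \<partial>(PiM UNIV (\<lambda>_. D)))
              = (\<integral>S. (mat 1 - transpose A ** A ** sketch_H A S ** transpose A ** A) \<partial>D)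
                ** (\<integral>\<omega>. (pinv_iter A X0 k \<omega> - pinv A) \<partial>(PiM UNIV (\<lambda>_. D))))
       \<and> ((integrable D (sketch_H A) \<and> pos_def (\<integral>S. sketch_H A S \<partial>D)) \<longrightarrow>
           (\<forall>k. (\<integral>\<omega>. (norm (pinv_iter A X0 k \<omega> - pinv A))\<^sup>2 \<partial>(PiM UNIV (\<lambda>_. D)))
                \<le> (1 - lambda_min_plus (transpose A ** A ** (\<integral>S. sketch_H A S \<partial>D) ** transpose A ** A)) ^ k
                   * (norm (X0 - pinv A))\<^sup>2))"
  using expected_pinv_iter_error_Suc[OF assms(1,2)] expected_sq_pinv_iter_error_le[OF assms]
  unfolding sketch_proj_def by blast

end
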